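(* For any vector field $X$ on $M$, $$\tau\big(\Phi(X), \nabla^{E'}_X\Phi'(X)\big) = -\tfrac{1}{2}D_M[X|XX],\qquad \tau\big(\Phi(X), \nabla^{E'}_X\nabla^{E'}_X\Phi'(X)\big) = -\tfrac{1}{2}D_M[X|XXX].$$
   Context: Let $\mathbb{R}^{2n+1}$ have coordinates $(\mathbf{x},\mathbf{p},z)$ and contact form $\theta=dz-\sum_ip_i\,dx_i$. A quasi-Hessian manifold $M$ is obtained by gluing Legendre submanifolds $L\subset\mathbb{R}^{2n+1}$ (local models) via affine Legendre equivalences. On each local model, $\pi^e:(\mathbf{x},\mathbf{p},z)\mapsto(\mathbf{x},z)$ and $\pi^m:(\mathbf{x},\mathbf{p},z)\mapsto(\mathbf{p},z')$ with $z'=\mathbf{p}^T\mathbf{x}-z$; $E=\{(q,w):dz(w)-\mathbf{p}(q)^Td\mathbf{x}(w)=0\}\subset L\times(\mathbb{R}^n_{\mathbf{x}}\times\mathbb{R}_z)$ with $\Phi=d\pi^e:TL\to E$ and flat connection $\nabla^E$ (flat frame $s_i=\partial/\partial x_i+p_i\,\partial/\partial z$), and analogously $E'$ with $\Phi'=d\pi^m$ and flat connection $\nabla^{E'}$ (flat frame $s_i^*=\partial/\partial p_i+x_i\,\partial/\partial z'$); these glue to bundles on $M$. $\tau=\sum_i dx_i\,dp_i$ (symmetrized), $\tau(s_i,s_j^* )=\tfrac12\delta_{ij}$, and $\tau(\eta,\zeta')$ means $\tau(\eta\oplus0,0\oplus\zeta')$. The canonical divergence on a local model is $D(p,q)=z(p)+z'(q)-\mathbf{x}(p)^T\mathbf{p}(q)$;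 it is invariant under affine Legendre equivalences and defines $D_M:M\times M\to\mathbb{R}$ (locally). For a function $\rho$ on $M\times M$, $\rho[X_1\cdots X_k|Y_1\cdots Y_l](r)=(X_1)_p\cdots(X_k)_p(Y_1)_q\cdots(Y_l)_q\,\rho(p,q)\big|_{p=q=r}$. *)

theory Defs
  imports "HOL-Analysis.Analysis"
begin

text \<open>A Legendre submanifold L of R^(2n+1) is described by a
  smooth embedded parametrisation u \<mapsto> (x(u), p(u), z(u)) of an open set U of R^n
  (a local chart of a local model of M).\<close>

fun Ck_on :: "nat \<Rightarrow> ('a::real_normed_vector) set \<Rightarrow> ('a \<Rightarrow> 'b::real_normed_vector) \<Rightarrow> bool" where
  "Ck_on 0 U f = continuous_on U f"
| "Ck_on (Suc k) U f = (f differentiable_on U \<and>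
      (\<forall>v. Ck_on k U (\<lambda>u. frechet_derivative f (at u) v)))"

definition smooth_on :: "('a::real_normed_vector) set \<Rightarrow> ('a \<Rightarrow> 'b::real_normed_vector) \<Rightarrow> bool" where
  "smooth_on U f \<longleftrightarrow> (\<forall>k. Ck_on k U f)"

definition vf_deriv :: "('a::real_normed_vector \<Rightarrow> 'a) \<Rightarrow> ('a \<Rightarrow> 'b::real_normed_vector) \<Rightarrow> 'a \<Rightarrow> 'b" where
  "vf_deriv X f u = frechet_derivative f (at u) (X u)"

definition zprime :: "('a \<Rightarrow> real^'n) \<Rightarrow> ('a \<Rightarrow> real^'n) \<Rightarrow> ('a \<Rightarrow> real) \<Rightarrow> 'a \<Rightarrow> real" where
  "zprime xf pf zf u = pf u \<bullet> xf u - zf u"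

(* Phi(X) = d pi^e (X) \<in> E \<subseteq> R^n_x \<times> R_z *)
definition PhiE :: "('a \<Rightarrow> real^'n) \<Rightarrow> ('a \<Rightarrow> real) \<Rightarrow> ('a::real_normed_vector \<Rightarrow> 'a) \<Rightarrow> 'a \<Rightarrow> (real^'n) \<times> real" where
  "PhiE xf zf X u = (vf_deriv X xf u, vf_deriv X zf u)"

(* Phi'(X) = d pi^m (X) \<in> E' \<subseteq> R^n_p \<times> R_z' *)
definition PhiE' :: "('a \<Rightarrow> real^'n) \<Rightarrow> ('a \<Rightarrow> real^'n) \<Rightarrow> ('a \<Rightarrow> real) \<Rightarrow> ('a::real_normed_vector \<Rightarrow> 'a) \<Rightarrow> 'a \<Rightarrow> (real^'n) \<times> real" where
  "PhiE' xf pf zf X u = (vf_deriv X pf u, vf_deriv X (zprime xf pf zf) u)"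

(* flat connection on E': a section \<sigma> = \<Sum> a_i s_i^* with s_i^* = d/dp_i + x_i d/dz'
   has frame coefficients a = p-component of \<sigma>; \<nabla>_X \<sigma> = \<Sum> X(a_i) s_i^* *)
definition nablaE' :: "('a \<Rightarrow> real^'n) \<Rightarrow> ('a::real_normed_vector \<Rightarrow> 'a) \<Rightarrow> ('a \<Rightarrow> (real^'n) \<times> real) \<Rightarrow> 'a \<Rightarrow> (real^'n) \<times> real" where
  "nablaE' xf X \<sigma> u = (let a = vf_deriv X (\<lambda>v. fst (\<sigma> v)) u in (a, xf u \<bullet> a))"

(* tau = \<Sum> dx_i dp_i (symmetrized) on (R^n_x \<times> R_z) \<oplus> (R^n_p \<times> R_z') *)
definition tau :: "(((real^'n) \<times> real) \<times> ((real^'n) \<times> real)) \<Rightarrow> (((real^'n) \<times> real) \<times> ((real^'n) \<times> real)) \<Rightarrow> real" where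
  "tau v w = (1/2) * (\<Sum>i\<in>UNIV. fst (fst v) $ i * fst (snd w) $ i + fst (fst w) $ i * fst (snd v) $ i)"

definition tau_mixed :: "((real^'n) \<times> real) \<Rightarrow> ((real^'n) \<times> real) \<Rightarrow> real" where
  "tau_mixed \<eta> \<zeta> = tau (\<eta>, 0) (0, \<zeta>)"

definition canon_div :: "('a \<Rightarrow> real^'n) \<Rightarrow> ('a \<Rightarrow> real^'n) \<Rightarrow> ('a \<Rightarrow> real) \<Rightarrow> 'a \<Rightarrow> 'a \<Rightarrow> real" where
  "canon_div xf pf zf a b = zf a + zprime xf pf zf b - xf a \<bullet> pf b"

definition pd1 :: "('a::real_normed_vector \<Rightarrow> 'a) \<Rightarrow> ('a \<Rightarrow> 'a \<Rightarrow> real) \<Rightarrow> 'a \<Rightarrow> 'a \<Rightarrow> real" where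
  "pd1 X \<rho> a b = vf_deriv X (\<lambda>a'. \<rho> a' b) a"

definition pd2 :: "('a::real_normed_vector \<Rightarrow> 'a) \<Rightarrow> ('a \<Rightarrow> 'a \<Rightarrow> real) \<Rightarrow> 'a \<Rightarrow> 'a \<Rightarrow> real" where
  "pd2 Y \<rho> a b = vf_deriv Y (\<lambda>b'. \<rho> a b') b"

(* \<rho>[X1..Xk | Y1..Yl](r) = (X1)_p..(Xk)_p (Y1)_q..(Yl)_q \<rho>(p,q) at p = q = r *)
definition bracket :: "('a::real_normed_vector \<Rightarrow> 'a \<Rightarrow> real) \<Rightarrow> ('a \<Rightarrow> 'a) list \<Rightarrow> ('a \<Rightarrow> 'a) list \<Rightarrow> 'a \<Rightarrow> real" where
  "bracket \<rho> Xs Ys r = foldr pd1 Xs (foldr pd2 Ys \<rho>) r r"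

end

theory Submission
  imports Defs
begin

text \<open>The coefficients of a section of E' in its flat frame are its p-components, so the
  connection differentiates p-components only and
  \<open>\<tau>(\<Phi>(X), \<nabla>^k \<Phi>'(X)) = 1/2 X(x) \<bullet> X^(k+1)(p)\<close>.
  On the other side, \<open>D(p,q) = z(p) + z'(q) - x(p) \<bullet> p(q)\<close>; differentiating l \<ge> 1 times along X
  in q removes \<open>z(p)\<close> and leaves \<open>X^l z'(q) - x(p) \<bullet> X^l p(q)\<close>, and one more derivative in p
  leaves \<open>-X(x) \<bullet> X^l p\<close>.\<close>

lemma Ck_on_Suc_imp_Ck_on: "Ck_on (Suc k) U f \<Longrightarrow> Ck_on k U f"
  by (induction k arbitrary: f) (simp_all add: differentiable_imp_continuous_on)

lemma Ck_on_Suc_has_derivative: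
  assumes "open U" "Ck_on (Suc k) U f" "u \<in> U"
  shows "(f has_derivative frechet_derivative f (at u)) (at u)"
proof -
  have "f differentiable_on U" using assms(2) by simp
  then show ?thesis
    using assms(3) differentiable_on_eq_differentiable_at[OF assms(1)] frechet_derivative_works
    by blast
qed

lemma Ck_on_cong:
  assumes "open U" "\<forall>u\<in>U. f u = g u" "Ck_on k U f"
  shows "Ck_on k U g"
  using assms(2,3)
proof (induction k arbitrary: f g)
  case 0
  then show ?case using continuous_on_cong[of U U f g] by simp
next
  case (Suc k)
  have g_deriv: "(g has_derivative frechet_derivative f (at u)) (at u)" if "u \<in> U" for u
    using Ck_on_Suc_has_derivative[OF assms(1) Suc.prems(2) that]
    by (rule has_derivative_transform_within_open[OF _ assms(1) that]) (use Suc.prems(1) in simp)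
  then have "g differentiable_on U"
    using assms(1) differentiable_on_eq_differentiable_at differentiable_def by blast
  moreover have "Ck_on k U (\<lambda>u. frechet_derivative g (at u) v)" for v
    using Suc.IH[of "\<lambda>u. frechet_derivative f (at u) v"] Suc.prems(2)
      frechet_derivative_at[OF g_deriv] by simp
  ultimately show ?case by simp
qed

lemma Ck_on_SucI:
  assumes "open U" "\<forall>u\<in>U. (f has_derivative f' u) (at u)" "\<forall>v. Ck_on k U (\<lambda>u. f' u v)"
  shows "Ck_on (Suc k) U f"
proof -
  have "f differentiable_on U"
    using assms(1,2) differentiable_on_eq_differentiable_at differentiable_def by blast
  moreover have "Ck_on k U (\<lambda>u. frechet_derivative f (at u) v)" for v
  proof (rule Ck_on_cong[OF assms(1) _ assms(3)[rule_format, of v]])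
    show "\<forall>u\<in>U. f' u v = frechet_derivative f (at u) v"
      using assms(2) frechet_derivative_at by fastforce
  qed
  ultimately show ?thesis by simp
qed

lemma Ck_on_const: "Ck_on k U (\<lambda>u. c)"
proof (induction k arbitrary: c)
  case 0
  then show ?case by simp
next
  case (Suc k)
  have "frechet_derivative (\<lambda>u. c) (at u) = (\<lambda>v. 0)" for u
    by (rule frechet_derivative_at[symmetric]) simp
  then show ?case using Suc.IH by simp
qed

lemma Ck_on_add:
  assumes "open U"
  shows "Ck_on k U f \<Longrightarrow> Ck_on k U g \<Longrightarrow> Ck_on k U (\<lambda>u. f u + g u)"
proof (induction k arbitrary: f g)
  case 0
  then show ?case by (simp add: continuous_on_add)
next
  case (Suc k)
  show ?case
  proof (rule Ck_on_SucI[OF assms])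
    show "\<forall>u\<in>U. ((\<lambda>u. f u + g u) has_derivative
        (\<lambda>v. frechet_derivative f (at u) v + frechet_derivative g (at u) v)) (at u)"
      using Ck_on_Suc_has_derivative[OF assms] Suc.prems by (blast intro: has_derivative_add)
    show "\<forall>v. Ck_on k U (\<lambda>u. frechet_derivative f (at u) v + frechet_derivative g (at u) v)"
      using Suc.IH Suc.prems by simp
  qed
qed

lemma Ck_on_sum:
  assumes "open U" "\<forall>i\<in>S. Ck_on k U (f i)"
  shows "Ck_on k U (\<lambda>u. \<Sum>i\<in>S. f i u)"
proof (cases "finite S")
  case True
  then show ?thesis
    using assms(2)
    by (induction S rule: finite_induct) (simp_all add: Ck_on_const Ck_on_add[OF assms(1)])
qed (simp add: Ck_on_const)

lemma (in bounded_bilinear) Ck_on: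
  assumes "open U"
  shows "Ck_on k U f \<Longrightarrow> Ck_on k U g \<Longrightarrow> Ck_on k U (\<lambda>u. prod (f u) (g u))"
proof (induction k arbitrary: f g)
  case 0
  then show ?case by (simp add: continuous_on)
next
  case (Suc k)
  show ?case
  proof (rule Ck_on_SucI[OF assms])
    show "\<forall>u\<in>U. ((\<lambda>u. prod (f u) (g u)) has_derivative
        (\<lambda>v. prod (f u) (frechet_derivative g (at u) v)
            + prod (frechet_derivative f (at u) v) (g u))) (at u)"
      using FDERIV[OF Ck_on_Suc_has_derivative[OF assms Suc.prems(1)]
          Ck_on_Suc_has_derivative[OF assms Suc.prems(2)]] by blast
    have "Ck_on k U f" "Ck_on k U g"
      using Suc.prems Ck_on_Suc_imp_Ck_on by blast+
    then show "\<forall>v. Ck_on k U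
        (\<lambda>u. prod (f u) (frechet_derivative g (at u) v)
            + prod (frechet_derivative f (at u) v) (g u))"
      using Suc.IH Suc.prems by (simp add: Ck_on_add[OF assms])
  qed
qed

lemma Ck_on_diff:
  assumes "open U" "Ck_on k U f" "Ck_on k U g"
  shows "Ck_on k U (\<lambda>u. f u - g u)"
proof -
  have "Ck_on k U (\<lambda>u. (- 1) *\<^sub>R g u)"
    using bounded_bilinear.Ck_on[OF bounded_bilinear_scaleR assms(1) Ck_on_const assms(3)] .
  then have "Ck_on k U (\<lambda>u. f u + (- 1) *\<^sub>R g u)"
    by (rule Ck_on_add[OF assms(1,2)])
  then show ?thesis by simp
qed

lemma Ck_on_vf_deriv:
  fixes f :: "'a::euclidean_space \<Rightarrow> 'b::real_normed_vector"
  assumes "open U" "Ck_on (Suc k) U f" "Ck_on k U X"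
  shows "Ck_on k U (vf_deriv X f)"
proof (rule Ck_on_cong[OF assms(1)])
  show "\<forall>u\<in>U. (\<Sum>b\<in>Basis. (X u \<bullet> b) *\<^sub>R frechet_derivative f (at u) b) = vf_deriv X f u"
  proof
    fix u assume "u \<in> U"
    then have "linear (frechet_derivative f (at u))"
      using Ck_on_Suc_has_derivative[OF assms(1,2)] has_derivative_linear by blast
    then have "frechet_derivative f (at u) (\<Sum>b\<in>Basis. (X u \<bullet> b) *\<^sub>R b)
        = (\<Sum>b\<in>Basis. (X u \<bullet> b) *\<^sub>R frechet_derivative f (at u) b)"
      by (simp add: linear_sum linear_scale)
    then show "(\<Sum>b\<in>Basis. (X u \<bullet> b) *\<^sub>R frechet_derivative f (at u) b) = vf_deriv X f u"
      by (simp add: vf_deriv_def euclidean_representation)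
  qed
  show "Ck_on k U (\<lambda>u. \<Sum>b\<in>Basis. (X u \<bullet> b) *\<^sub>R frechet_derivative f (at u) b)"
  proof (rule Ck_on_sum[OF assms(1)], intro ballI)
    fix b :: 'a
    have "Ck_on k U (\<lambda>u. X u \<bullet> b)"
      using bounded_bilinear.Ck_on[OF bounded_bilinear_inner assms(1,3) Ck_on_const] .
    moreover have "Ck_on k U (\<lambda>u. frechet_derivative f (at u) b)"
      using assms(2) by simp
    ultimately show "Ck_on k U (\<lambda>u. (X u \<bullet> b) *\<^sub>R frechet_derivative f (at u) b)"
      by (rule bounded_bilinear.Ck_on[OF bounded_bilinear_scaleR assms(1)])
  qed
qed

lemma smooth_on_imp_differentiable:
  "open U \<Longrightarrow> smooth_on U f \<Longrightarrow> u \<in> U \<Longrightarrow> f differentiable at u"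
  unfolding smooth_on_def using Ck_on_Suc_has_derivative differentiable_def by blast

lemma smooth_on_funpow_vf_deriv:
  fixes f :: "'a::euclidean_space \<Rightarrow> 'b::real_normed_vector"
  assumes "open U" "smooth_on U X" "smooth_on U f"
  shows "smooth_on U ((vf_deriv X ^^ l) f)"
proof (induction l)
  case 0
  show ?case using assms(3) by simp
next
  case (Suc l)
  have "Ck_on k U (vf_deriv X ((vf_deriv X ^^ l) f))" for k
  proof (rule Ck_on_vf_deriv[OF assms(1)])
    show "Ck_on (Suc k) U ((vf_deriv X ^^ l) f)"
      using Suc.IH unfolding smooth_on_def by (rule spec)
    show "Ck_on k U X"
      using assms(2) unfolding smooth_on_def by (rule spec)
  qed
  then show ?case by (simp add: smooth_on_def)
qed

lemma smooth_on_zprime: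
  assumes "open U" "smooth_on U xf" "smooth_on U pf" "smooth_on U zf"
  shows "smooth_on U (zprime xf pf zf)"
  unfolding smooth_on_def
proof
  fix k
  have "Ck_on k U (\<lambda>u. pf u \<bullet> xf u)"
    using bounded_bilinear.Ck_on[OF bounded_bilinear_inner assms(1)] assms(2,3)
    unfolding smooth_on_def by blast
  then have "Ck_on k U (\<lambda>u. pf u \<bullet> xf u - zf u)"
    using Ck_on_diff[OF assms(1)] assms(4) unfolding smooth_on_def by blast
  then show "Ck_on k U (zprime xf pf zf)"
    by (simp add: zprime_def[abs_def])
qed

lemma vf_deriv_const_minus_inner:
  fixes f :: "'a::real_normed_vector \<Rightarrow> 'b::real_inner"
  assumes "f differentiable at a"
  shows "vf_deriv X (\<lambda>a'. c - f a' \<bullet> w) a = - (vf_deriv X f a \<bullet> w)"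
proof -
  have "((\<lambda>a'. c - f a' \<bullet> w) has_derivative (\<lambda>h. 0 - frechet_derivative f (at a) h \<bullet> w)) (at a)"
    using assms unfolding frechet_derivative_works by (intro derivative_intros)
  then show ?thesis
    unfolding vf_deriv_def by (simp add: frechet_derivative_at[symmetric])
qed

lemma vf_deriv_affine_inner:
  fixes g :: "'a::real_normed_vector \<Rightarrow> real" and h :: "'a \<Rightarrow> 'b::real_inner"
  assumes "open U" "b \<in> U" "\<forall>b'\<in>U. F b' = c + g b' - v \<bullet> h b'"
    and "g differentiable at b" "h differentiable at b"
  shows "vf_deriv X F b = vf_deriv X g b - v \<bullet> vf_deriv X h b"
proof -
  have "((\<lambda>b'. c + g b' - v \<bullet> h b') has_derivative
      (\<lambda>w. 0 + frechet_derivative g (at b) w - v \<bullet> frechet_derivative h (at b) w)) (at b)"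
    using assms(4,5) unfolding frechet_derivative_works by (intro derivative_intros)
  then have "(F has_derivative
      (\<lambda>w. 0 + frechet_derivative g (at b) w - v \<bullet> frechet_derivative h (at b) w)) (at b)"
    by (rule has_derivative_transform_within_open[OF _ assms(1,2)]) (use assms(3) in simp)
  then show ?thesis
    unfolding vf_deriv_def by (simp add: frechet_derivative_at[symmetric])
qed

lemma tau_mixed_eq_inner: "tau_mixed \<eta> \<zeta> = (1/2) * (fst \<eta> \<bullet> fst \<zeta>)"
  unfolding tau_mixed_def tau_def by (simp add: inner_vec_def)

lemma fst_funpow_nablaE'_PhiE':
  "fst ((nablaE' xf X ^^ j) (PhiE' xf pf zf X) u) = (vf_deriv X ^^ Suc j) pf u"
  by (induction j arbitrary: u) (simp_all add: PhiE'_def nablaE'_def Let_def)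

lemma tau_mixed_PhiE_funpow_nablaE':
  "tau_mixed (PhiE xf zf X r) ((nablaE' xf X ^^ j) (PhiE' xf pf zf X) r)
     = (1/2) * (vf_deriv X xf r \<bullet> (vf_deriv X ^^ Suc j) pf r)"
  by (simp add: tau_mixed_eq_inner PhiE_def fst_funpow_nablaE'_PhiE' del: funpow.simps)

lemma funpow_pd2_canon_div:
  fixes xf pf :: "'a::euclidean_space \<Rightarrow> real^'n"
  assumes "open U" "smooth_on U xf" "smooth_on U pf" "smooth_on U zf" "smooth_on U X"
  shows "\<forall>b\<in>U. (pd2 X ^^ Suc l) (canon_div xf pf zf) a b
    = (vf_deriv X ^^ Suc l) (zprime xf pf zf) b - xf a \<bullet> (vf_deriv X ^^ Suc l) pf b"
proof -
  have zprime_diff: "(vf_deriv X ^^ l) (zprime xf pf zf) differentiable at b" if "b \<in> U" for b l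
    using smooth_on_funpow_vf_deriv[OF assms(1,5) smooth_on_zprime[OF assms(1-4)]]
    by (rule smooth_on_imp_differentiable[OF assms(1) _ that])
  have pf_diff: "(vf_deriv X ^^ l) pf differentiable at b" if "b \<in> U" for b l
    using smooth_on_funpow_vf_deriv[OF assms(1,5,3)]
    by (rule smooth_on_imp_differentiable[OF assms(1) _ that])
  show ?thesis
  proof (induction l)
    case 0
    show ?case
      using vf_deriv_affine_inner[where F = "\<lambda>b. canon_div xf pf zf a b"
          and c = "zf a" and v = "xf a", OF assms(1) _ _ zprime_diff[of _ 0] pf_diff[of _ 0]]
      by (simp add: pd2_def canon_div_def)
  next
    case (Suc l)
    show ?case
      using vf_deriv_affine_inner[where F = "(pd2 X ^^ Suc l) (canon_div xf pf zf) a"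
          and c = 0 and v = "xf a", OF assms(1) _ _ zprime_diff[of _ "Suc l"] pf_diff[of _ "Suc l"]]
        Suc.IH
      by (simp add: pd2_def[of X "(pd2 X ^^ Suc l) (canon_div xf pf zf)"]
          funpow.simps(2)[where n = "Suc l"] del: funpow.simps)
  qed
qed

lemma bracket_canon_div:
  fixes xf pf :: "'a::euclidean_space \<Rightarrow> real^'n"
  assumes "open U" "smooth_on U xf" "smooth_on U pf" "smooth_on U zf" "smooth_on U X"
    and "r \<in> U"
  shows "bracket (canon_div xf pf zf) [X] (replicate (Suc l) X) r
    = - (vf_deriv X xf r \<bullet> (vf_deriv X ^^ Suc l) pf r)"
proof -
  have "bracket (canon_div xf pf zf) [X] (replicate (Suc l) X) r
      = vf_deriv X (\<lambda>a. (pd2 X ^^ Suc l) (canon_div xf pf zf) a r) r"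
    unfolding bracket_def foldr_replicate by (simp add: pd1_def del: funpow.simps)
  also have "\<dots> = vf_deriv X (\<lambda>a. (vf_deriv X ^^ Suc l) (zprime xf pf zf) r
      - xf a \<bullet> (vf_deriv X ^^ Suc l) pf r) r"
    using funpow_pd2_canon_div[OF assms(1-5)] assms(6) by simp
  also have "\<dots> = - (vf_deriv X xf r \<bullet> (vf_deriv X ^^ Suc l) pf r)"
    using vf_deriv_const_minus_inner smooth_on_imp_differentiable assms(1,2,6) by blast
  finally show ?thesis .
qed

theorem tau_mixed_funpow_nablaE'_eq_bracket:
  fixes xf pf :: "'a::euclidean_space \<Rightarrow> real^'n"
  assumes "open U" "smooth_on U xf" "smooth_on U pf" "smooth_on U zf" "smooth_on U X"
    and "r \<in> U"
  shows "tau_mixed (PhiE xf zf X r) ((nablaE' xf X ^^ l) (PhiE' xf pf zf X) r)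
    = - (1/2) * bracket (canon_div xf pf zf) [X] (replicate (Suc l) X) r"
  unfolding tau_mixed_PhiE_funpow_nablaE' bracket_canon_div[OF assms] by simp

theorem corollary4p3:
  fixes U :: "(real^'n) set"
    and xf pf :: "real^'n \<Rightarrow> real^'n"
    and zf :: "real^'n \<Rightarrow> real"
    and X :: "real^'n \<Rightarrow> real^'n"
  assumes "open U"
    and "smooth_on U xf" "smooth_on U pf" "smooth_on U zf"
    and legendre: "\<forall>u\<in>U. \<forall>w. frechet_derivative zf (at u) w = pf u \<bullet> frechet_derivative xf (at u) w"
    and immersion: "\<forall>u\<in>U. inj (frechet_derivative (\<lambda>v. (xf v, pf v, zf v)) (at u))"
    and embedding: "\<exists>g. homeomorphism U ((\<lambda>v. (xf v, pf v, zf v)) ` U) (\<lambda>v. (xf v, pf v, zf v)) g"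
    and "smooth_on U X"
  shows "\<forall>r\<in>U.
     tau_mixed (PhiE xf zf X r) (nablaE' xf X (PhiE' xf pf zf X) r)
       = - (1/2) * bracket (canon_div xf pf zf) [X] [X, X] r
   \<and> tau_mixed (PhiE xf zf X r) (nablaE' xf X (nablaE' xf X (PhiE' xf pf zf X)) r)
       = - (1/2) * bracket (canon_div xf pf zf) [X] [X, X, X] r"
  using tau_mixed_funpow_nablaE'_eq_bracket[OF assms(1-4,8), of _ 1]
    tau_mixed_funpow_nablaE'_eq_bracket[OF assms(1-4,8), of _ 2]
  by (simp add: numeral_2_eq_2)

end
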